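(* Fix $a\in\mathbb{C}_v$ and $r>0$, and let $F(z)=\sum_{i\ge0}c_i(z-a)^i\in\mathbb{C}_v[[z-a]]$ converge on $D(a,r)$. If $F'$ has no zeros in $D(a,r)$, then $F$ maps $D(a,\kappa r)$ bijectively onto $D(c_0,|c_1|\kappa r)$.
   Context: $\mathbb{C}_v$ is an algebraically closed field of characteristic zero, complete with respect to a nontrivial non-archimedean absolute value $|\cdot|$; $D(a,r)=\{x\in\mathbb{C}_v:|x-a|<r\}$. Let $p$ be the residue characteristic of $\mathbb{C}_v$; define $\kappa:=|p|^{1/(p-1)}$ if $p>0$ and $\kappa:=1$ if $p=0$ (so $0<\kappa\le1$). *)

theory Defs
  imports Complex_Main "HOL-Computational_Algebra.Polynomial" "HOL-Computational_Algebra.Primes"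
begin

definition nonarch_abs :: "('a::field \<Rightarrow> real) \<Rightarrow> bool" where
  "nonarch_abs av \<longleftrightarrow>
     (\<forall>x. av x \<ge> 0) \<and> (\<forall>x. av x = 0 \<longleftrightarrow> x = 0) \<and>
     (\<forall>x y. av (x * y) = av x * av y) \<and>
     (\<forall>x y. av (x + y) \<le> max (av x) (av y))"

definition nontrivial_abs :: "('a::field \<Rightarrow> real) \<Rightarrow> bool" where
  "nontrivial_abs av \<longleftrightarrow> (\<exists>x. x \<noteq> 0 \<and> av x \<noteq> 1)"

definition complete_abs :: "('a::field \<Rightarrow> real) \<Rightarrow> bool" where
  "complete_abs av \<longleftrightarrow>
     (\<forall>X::nat \<Rightarrow> 'a. (\<forall>e>0. \<exists>N. \<forall>m\<ge>N. \<forall>n\<ge>N. av (X m - X n) < e) \<longrightarrow>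
        (\<exists>L. (\<lambda>n. av (X n - L)) \<longlonglongrightarrow> 0))"

definition alg_closed :: "'a::field itself \<Rightarrow> bool" where
  "alg_closed _ \<longleftrightarrow> (\<forall>p::'a poly. degree p > 0 \<longrightarrow> (\<exists>x. poly p x = 0))"

text \<open>The standing hypotheses on \<open>\<complex>\<^sub>v\<close> (characteristic zero is the type class).\<close>
definition Cv_field :: "('a::field_char_0 \<Rightarrow> real) \<Rightarrow> bool" where
  "Cv_field av \<longleftrightarrow> alg_closed TYPE('a) \<and> nonarch_abs av \<and> nontrivial_abs av \<and> complete_abs av"

definition disc :: "('a::field \<Rightarrow> real) \<Rightarrow> 'a \<Rightarrow> real \<Rightarrow> 'a set" where
  "disc av a r = {x. av (x - a) < r}"

text \<open>Residue characteristic: p > 0 iff p*1 lies in the maximal ideal, i.e. |p| < 1.\<close>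
definition residue_char :: "('a::field_char_0 \<Rightarrow> real) \<Rightarrow> nat" where
  "residue_char av = (if \<exists>p. prime p \<and> av (of_nat p) < 1
                      then (THE p. prime p \<and> av (of_nat p) < 1) else 0)"

definition kappa :: "('a::field_char_0 \<Rightarrow> real) \<Rightarrow> real" where
  "kappa av = (let p = residue_char av in
               if p > 0 then av (of_nat p) powr (1 / (real p - 1)) else 1)"

definition sums_v :: "('a::field \<Rightarrow> real) \<Rightarrow> (nat \<Rightarrow> 'a) \<Rightarrow> 'a \<Rightarrow> bool" where
  "sums_v av f s \<longleftrightarrow> (\<lambda>n. av ((\<Sum>i<n. f i) - s)) \<longlonglongrightarrow> 0"

definition ps_converges_on :: "('a::field \<Rightarrow> real) \<Rightarrow> (nat \<Rightarrow> 'a) \<Rightarrow> 'a \<Rightarrow> 'a set \<Rightarrow> bool" where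
  "ps_converges_on av c a S \<longleftrightarrow> (\<forall>z\<in>S. \<exists>s. sums_v av (\<lambda>i. c i * (z - a) ^ i) s)"

definition ps_eval :: "('a::field \<Rightarrow> real) \<Rightarrow> (nat \<Rightarrow> 'a) \<Rightarrow> 'a \<Rightarrow> 'a \<Rightarrow> 'a" where
  "ps_eval av c a z = (THE s. sums_v av (\<lambda>i. c i * (z - a) ^ i) s)"

definition ps_deriv :: "(nat \<Rightarrow> 'a::field) \<Rightarrow> nat \<Rightarrow> 'a" where
  "ps_deriv c i = of_nat (Suc i) * c (Suc i)"

end

theory Submission
  imports Defs
begin

text \<open>
  If \<open>F'\<close> has no zero on \<open>D(a,r)\<close>, its constant term \<open>c\<^sub>1\<close> dominates on every smaller
  disc: \<open>|i c\<^sub>i| t\<^sup>i\<^sup>-\<^sup>1 \<le> |c\<^sub>1|\<close> for \<open>t < r\<close>.  Otherwise some term would dominate the constant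
  term; the partial sums of \<open>F'\<close> then have roots in the closed disc of radius \<open>t\<close> which, by a
  Newton polygon estimate over the algebraically closed field, can be chosen to form a Cauchy
  sequence, and its limit would be a zero of \<open>F'\<close>.  Since \<open>|i| \<ge> \<kappa>\<^sup>i\<^sup>-\<^sup>1\<close>, this gives
  \<open>|c\<^sub>i| s\<^sup>i\<^sup>-\<^sup>1 \<le> q |c\<^sub>1|\<close> with \<open>q < 1\<close> on each closed disc of radius \<open>s < \<kappa> r\<close>, i.e.
  \<open>F z - F w\<close> equals \<open>c\<^sub>1 (z - w)\<close> up to an error of size \<open>q |c\<^sub>1 (z - w)|\<close>.  Injectivity
  and the inclusion of the image follow from the ultrametric inequality, and surjectivity from
  the contraction \<open>z \<mapsto> z - (F z - b) / c\<^sub>1\<close>.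
\<close>

lemma finite_ge_if_geometric_bound:
  fixes f :: "nat \<Rightarrow> real"
  assumes "\<And>i. f i \<le> B * \<rho> ^ i" and "0 \<le> \<rho>" "\<rho> < 1" and "0 < e"
  shows "finite {i. e \<le> f i}"
proof -
  have "(\<lambda>i. B * \<rho> ^ i) \<longlonglongrightarrow> B * 0"
    using assms(2,3) by (intro tendsto_mult tendsto_const LIMSEQ_power_zero) auto
  then obtain K where K: "\<forall>i\<ge>K. norm (B * \<rho> ^ i - 0) < e"
    using LIMSEQ_D[OF _ assms(4)] by fastforce
  have "{i. e \<le> f i} \<subseteq> {..<K}"
  proof
    fix i assume "i \<in> {i. e \<le> f i}"
    moreover have "B * \<rho> ^ i < e" if "K \<le> i"
      using K that by (auto simp: abs_less_iff)
    ultimately show "i \<in> {..<K}"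
      using assms(1)[of i] by (auto simp: not_less[symmetric])
  qed
  then show ?thesis
    by (rule finite_subset) auto
qed

lemma dominant_index:
  fixes f :: "nat \<Rightarrow> real"
  assumes "\<And>i. f i \<le> B * \<rho> ^ i" and "0 \<le> \<rho>" "\<rho> < 1" and "0 < f j"
  shows "\<exists>N. f j \<le> f N \<and> (\<forall>i. f i \<le> f N) \<and> (\<forall>i>N. f i < f N)"
proof -
  define S where "S = {i. f j \<le> f i}"
  have "finite S" "j \<in> S"
    using finite_ge_if_geometric_bound[OF assms] by (simp_all add: S_def)
  define T where "T = {i \<in> S. f i = Max (f ` S)}"
  have "Max (f ` S) \<in> f ` S"
    using \<open>finite S\<close> \<open>j \<in> S\<close> by (intro Max_in) auto
  then have "finite T" "T \<noteq> {}"
    using \<open>finite S\<close> by (auto simp: T_def)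
  define N where "N = Max T"
  have N: "N \<in> S" "f N = Max (f ` S)"
    using Max_in[OF \<open>finite T\<close> \<open>T \<noteq> {}\<close>] by (auto simp: N_def T_def)
  have "f i \<le> f N" if "i \<in> S" for i
    using N \<open>finite S\<close> that by simp
  then have le_N: "f i \<le> f N" for i
    using \<open>j \<in> S\<close> by (cases "i \<in> S") (force simp: S_def)+
  have "f i < f N" if "i > N" for i
  proof (rule ccontr)
    assume "\<not> f i < f N"
    then have "i \<in> T"
      using le_N[of i] N by (auto simp: T_def S_def)
    then show False
      using Max_ge[OF \<open>finite T\<close>] that unfolding N_def by fastforce
  qed
  then show ?thesis
    using le_N by blast
qed


definition shifted_partial_sum :: "(nat \<Rightarrow> 'a::comm_ring_1) \<Rightarrow> 'a \<Rightarrow> nat \<Rightarrow> 'a poly" where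
  "shifted_partial_sum g \<alpha> n = (\<Sum>j\<le>n. smult (g j) ([:\<alpha>, 1:] ^ j))"

lemma exists_root_radii:
  fixes C \<rho> :: real
  assumes "0 < N" "0 < C" "0 < \<rho>" "\<rho> < 1"
  obtains \<sigma> where "\<And>n. 0 < \<sigma> n" "\<And>n. \<sigma> n ^ N = C * \<rho> ^ Suc n" "decseq \<sigma>" "\<sigma> \<longlonglongrightarrow> 0"
proof
  let ?\<sigma> = "\<lambda>n. root N (C * \<rho> ^ Suc n)"
  show "0 < ?\<sigma> n" "?\<sigma> n ^ N = C * \<rho> ^ Suc n" for n
    using assms by (simp_all add: real_root_gt_zero)
  show "decseq ?\<sigma>"
  proof (rule decseq_SucI)
    fix n
    have "C * \<rho> ^ Suc (Suc n) \<le> C * \<rho> ^ Suc n"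
      using assms by (intro mult_left_mono power_decreasing) auto
    then show "?\<sigma> (Suc n) \<le> ?\<sigma> n"
      using assms(1) by simp
  qed
  have "(\<lambda>n. C * \<rho> ^ Suc n) \<longlonglongrightarrow> C * 0"
    using assms(3,4) by (intro tendsto_mult tendsto_const LIMSEQ_Suc[OF LIMSEQ_power_zero]) auto
  then show "?\<sigma> \<longlonglongrightarrow> 0"
    using tendsto_real_root[of _ 0 sequentially N] by simp
qed

lemma poly_shifted_partial_sum: "poly (shifted_partial_sum g \<alpha> n) y = (\<Sum>j\<le>n. g j * (\<alpha> + y) ^ j)"
  unfolding shifted_partial_sum_def by (simp add: poly_sum)

lemma coeff_linear_poly_power':
  "coeff ([:\<alpha>, 1:] ^ j) k = (if k \<le> j then of_nat (j choose k) * \<alpha> ^ (j - k) else (0::'a::comm_ring_1))"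
proof (cases "k \<le> j")
  case False
  have "degree ([:\<alpha>, 1:] ^ j) \<le> j"
    using degree_power_le[of "[:\<alpha>, 1:]" j] by simp
  then show ?thesis
    using False by (simp add: coeff_eq_0)
qed (simp add: coeff_linear_poly_power)

lemma coeff_shifted_partial_sum:
  "coeff (shifted_partial_sum g \<alpha> n) k = (\<Sum>j\<le>n. g j * coeff ([:\<alpha>, 1:] ^ j) k)"
  unfolding shifted_partial_sum_def by (simp add: coeff_sum)

lemma coeff_shifted_partial_sum_0:
  "coeff (shifted_partial_sum g 0 n) k = (if k \<le> n then g k else 0)"
proof -
  have "coeff (shifted_partial_sum g 0 n) k = (\<Sum>j\<le>n. if j = k then g j else 0)"
    unfolding coeff_shifted_partial_sum
    by (intro sum.cong refl) (auto simp: coeff_linear_poly_power' power_0_left)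
  then show ?thesis
    by simp
qed

section \<open>Non-archimedean absolute values\<close>

locale nonarch_valuation =
  fixes av :: "'a::field_char_0 \<Rightarrow> real"
  assumes nonarch_abs: "nonarch_abs av"
begin

lemma av_nonneg [simp]: "0 \<le> av x"
  and av_eq_0_iff [simp]: "av x = 0 \<longleftrightarrow> x = 0"
  and av_mult: "av (x * y) = av x * av y"
  and av_add_le: "av (x + y) \<le> max (av x) (av y)"
  using nonarch_abs unfolding nonarch_abs_def by auto

lemma av_0 [simp]: "av 0 = 0"
  by simp

lemma av_pos: "x \<noteq> 0 \<Longrightarrow> 0 < av x"
  using av_nonneg[of x] av_eq_0_iff[of x] by linarith

lemma av_1 [simp]: "av 1 = 1"
  using av_mult[of 1 1] av_pos[of 1] by simp

lemma av_uminus [simp]: "av (- x) = av x"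
proof -
  have "av (-1) * av (-1) = 1"
    using av_mult[of "-1" "-1"] by simp
  then have "av (-1) = 1"
    by (metis abs_of_nonneg abs_square_eq_1 av_nonneg power2_eq_square)
  then show ?thesis
    using av_mult[of "-1" x] by simp
qed

lemma av_minus_commute: "av (x - y) = av (y - x)"
  by (metis av_uminus minus_diff_eq)

lemma av_power [simp]: "av (x ^ n) = av x ^ n"
  by (induction n) (auto simp: av_mult)

lemma av_divide [simp]: "av (x / y) = av x / av y"
proof (cases "y = 0")
  case False
  then have "av y * av (inverse y) = 1"
    by (metis av_mult right_inverse av_1)
  then show ?thesis
    by (simp add: divide_inverse av_mult inverse_unique)
qed simp

lemma av_diff_le: "av (x - y) \<le> max (av x) (av y)"
  using av_add_le[of x "- y"] by simp

lemma av_diff_triangle: "av (x - z) \<le> max (av (x - y)) (av (y - z))"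
  using av_add_le[of "x - y" "y - z"] by simp

lemma av_add_eq_left: "av y < av x \<Longrightarrow> av (x + y) = av x"
  using av_add_le[of x y] av_add_le[of "x + y" "- y"] by simp

lemma av_of_nat_le_1: "av (of_nat n) \<le> 1"
proof (induction n)
  case (Suc n)
  then show ?case
    using av_add_le[of 1 "of_nat n"] by simp
qed simp

lemma av_of_int_le_1: "av (of_int n) \<le> 1"
  by (cases n rule: int_cases)
    (metis av_of_nat_le_1 of_int_of_nat_eq, metis av_uminus av_of_nat_le_1 of_int_minus of_int_of_nat_eq)

lemma av_sum_le:
  "finite A \<Longrightarrow> 0 \<le> E \<Longrightarrow> (\<And>i. i \<in> A \<Longrightarrow> av (f i) \<le> E) \<Longrightarrow> av (sum f A) \<le> E"
  by (induction A rule: finite_induct) (use av_add_le order_trans in fastforce)+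

lemma av_sum_less:
  "finite A \<Longrightarrow> 0 < E \<Longrightarrow> (\<And>i. i \<in> A \<Longrightarrow> av (f i) < E) \<Longrightarrow> av (sum f A) < E"
  by (induction A rule: finite_induct) (use av_add_le le_less_trans in fastforce)+

lemma av_power_diff_le:
  assumes "av x \<le> t" "av y \<le> t"
  shows "av (x ^ j - y ^ j) * t \<le> av (x - y) * t ^ j"
proof (induction j)
  case (Suc j)
  have t: "0 \<le> t"
    using assms(1) av_nonneg order_trans by blast
  have "x ^ Suc j - y ^ Suc j = x * (x ^ j - y ^ j) + (x - y) * y ^ j"
    by (simp add: algebra_simps)
  then have "av (x ^ Suc j - y ^ Suc j) \<le> max (av x * av (x ^ j - y ^ j)) (av (x - y) * av y ^ j)"
    by (metis av_add_le av_mult av_power)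
  then have "av (x ^ Suc j - y ^ Suc j) * t \<le> max (av x * av (x ^ j - y ^ j)) (av (x - y) * av y ^ j) * t"
    by (rule mult_right_mono[OF _ t])
  also have "\<dots> = max (av x * av (x ^ j - y ^ j) * t) (av (x - y) * av y ^ j * t)"
    using t by (simp add: max_mult_distrib_right)
  also have "\<dots> \<le> av (x - y) * t ^ Suc j"
  proof (rule max.boundedI)
    show "av x * av (x ^ j - y ^ j) * t \<le> av (x - y) * t ^ Suc j"
      using mult_mono[OF assms(1) Suc.IH] t by (simp add: algebra_simps)
    have "av y ^ j * t \<le> t ^ Suc j"
      using mult_right_mono[OF power_mono[OF assms(2) av_nonneg] t] by (simp add: mult.commute)
    then show "av (x - y) * av y ^ j * t \<le> av (x - y) * t ^ Suc j"
      by (simp add: mult.assoc mult_left_mono)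
  qed
  finally show ?case .
qed simp

lemma av_limit_le:
  assumes "(\<lambda>n. av (X n - L)) \<longlonglongrightarrow> 0" and "\<And>n. n \<ge> N \<Longrightarrow> av (X n - y) \<le> E"
  shows "av (L - y) \<le> E"
proof -
  have "(\<lambda>n. av (X n - L) + E) \<longlonglongrightarrow> E"
    using tendsto_add[OF assms(1) tendsto_const, of E] by simp
  moreover have "av (L - y) \<le> av (X n - L) + E" if "n \<ge> N" for n
  proof -
    have "av (L - y) \<le> max (av (X n - L)) (av (X n - y))"
      using av_diff_triangle[of L y "X n"] av_minus_commute[of L "X n"] by simp
    then show ?thesis
      using assms(2)[OF that] av_nonneg[of "X n - L"] av_nonneg[of "X n - y"] by linarith
  qed
  ultimately show ?thesis
    using LIMSEQ_le_const by blast
qed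

lemma av_limit_unique:
  assumes "(\<lambda>n. av (X n - L)) \<longlonglongrightarrow> 0" "(\<lambda>n. av (X n - L')) \<longlonglongrightarrow> 0"
  shows "L = L'"
proof -
  have "av (L - L') \<le> e" if "e > 0" for e
  proof -
    obtain N where "\<forall>n\<ge>N. av (X n - L') < e"
      using LIMSEQ_D[OF assms(2) \<open>e > 0\<close>] by auto
    then show ?thesis
      using av_limit_le[OF assms(1), of N L' e] by fastforce
  qed
  then have "av (L - L') \<le> 0"
    by (meson dense not_le)
  then show ?thesis
    using av_nonneg[of "L - L'"] by simp
qed

lemma sums_v_unique: "sums_v av f s \<Longrightarrow> sums_v av f s' \<Longrightarrow> s = s'"
  unfolding sums_v_def by (rule av_limit_unique)

lemma ps_eval_eqI: "sums_v av (\<lambda>i. c i * (z - a) ^ i) s \<Longrightarrow> ps_eval av c a z = s"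
  unfolding ps_eval_def by (rule the_equality) (auto intro: sums_v_unique)

lemma ps_eval_center: "ps_eval av c a a = c 0"
proof (rule ps_eval_eqI)
  have "(\<lambda>n. av (sum (\<lambda>i. c i * (a - a) ^ i) {..<Suc n} - c 0)) \<longlonglongrightarrow> 0"
    by (simp add: sum.lessThan_Suc_shift)
  then show "sums_v av (\<lambda>i. c i * (a - a) ^ i) (c 0)"
    unfolding sums_v_def by (rule LIMSEQ_imp_Suc)
qed

lemma sums_v_le:
  assumes "sums_v av f s" and "\<And>n. n \<ge> N \<Longrightarrow> av (sum f {..<n} - y) \<le> E"
  shows "av (s - y) \<le> E"
  using assms unfolding sums_v_def by (rule av_limit_le)

lemma sums_v_diff:
  assumes "sums_v av f s" "sums_v av g s'"
  shows "sums_v av (\<lambda>i. f i - g i) (s - s')"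
  unfolding sums_v_def
proof (rule tendsto_sandwich[OF _ _ tendsto_const])
  let ?d = "\<lambda>n. av (sum f {..<n} - s) + av (sum g {..<n} - s')"
  show "?d \<longlonglongrightarrow> 0"
    using tendsto_add[OF assms[unfolded sums_v_def]] by simp
  have "av (sum (\<lambda>i. f i - g i) {..<n} - (s - s')) \<le> ?d n" for n
  proof -
    have "sum (\<lambda>i. f i - g i) {..<n} - (s - s') = (sum f {..<n} - s) - (sum g {..<n} - s')"
      by (simp add: sum_subtractf)
    then have "av (sum (\<lambda>i. f i - g i) {..<n} - (s - s'))
        \<le> max (av (sum f {..<n} - s)) (av (sum g {..<n} - s'))"
      by (metis av_diff_le)
    then show ?thesis
      using av_nonneg[of "sum f {..<n} - s"] av_nonneg[of "sum g {..<n} - s'"] by linarith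
  qed
  then show "\<forall>\<^sub>F n in sequentially. av (sum (\<lambda>i. f i - g i) {..<n} - (s - s')) \<le> ?d n"
    by simp
qed simp

lemma sums_v_terms_tendsto_0:
  assumes "sums_v av f s"
  shows "(\<lambda>n. av (f n)) \<longlonglongrightarrow> 0"
proof (rule tendsto_sandwich[OF _ _ tendsto_const])
  let ?e = "\<lambda>n. av (sum f {..<n} - s)"
  have "?e \<longlonglongrightarrow> 0"
    using assms unfolding sums_v_def .
  then show "(\<lambda>n. ?e (Suc n) + ?e n) \<longlonglongrightarrow> 0"
    using tendsto_add[OF LIMSEQ_Suc] by fastforce
  have "av (f n) \<le> ?e (Suc n) + ?e n" for n
  proof -
    have "f n = (sum f {..<Suc n} - s) - (sum f {..<n} - s)"
      by simp
    then have "av (f n) \<le> max (?e (Suc n)) (?e n)"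
      by (metis av_diff_le)
    then show ?thesis
      using av_nonneg[of "sum f {..<Suc n} - s"] av_nonneg[of "sum f {..<n} - s"] by linarith
  qed
  then show "\<forall>\<^sub>F n in sequentially. av (f n) \<le> ?e (Suc n) + ?e n"
    by simp
qed simp

lemma av_sum_tail_le:
  assumes "sums_v av (\<lambda>i. g i * x ^ i) s" and "av x \<le> t"
    and "\<And>i. av (g i) * t ^ i \<le> B * \<rho> ^ i" and "0 \<le> \<rho>" "\<rho> \<le> 1" "0 \<le> B"
  shows "av (s - (\<Sum>i\<le>m. g i * x ^ i)) \<le> B * \<rho> ^ Suc m"
proof (rule sums_v_le[OF assms(1), of "Suc m"])
  fix n assume n: "Suc m \<le> n"
  have "av (g i * x ^ i) \<le> B * \<rho> ^ Suc m" if "i \<in> {Suc m..<n}" for i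
  proof -
    have "av (g i * x ^ i) \<le> av (g i) * t ^ i"
      using assms(2) by (auto simp: av_mult intro!: mult_left_mono power_mono)
    also have "\<dots> \<le> B * \<rho> ^ i"
      by (rule assms(3))
    also have "\<dots> \<le> B * \<rho> ^ Suc m"
      using that assms(4-6) by (intro mult_left_mono power_decreasing) auto
    finally show ?thesis .
  qed
  moreover have "(\<Sum>i<n. g i * x ^ i) - (\<Sum>i\<le>m. g i * x ^ i) = (\<Sum>i=Suc m..<n. g i * x ^ i)"
    using sum_diff_nat_ivl[of 0 "Suc m" n] n by (simp add: atLeast0LessThan lessThan_Suc_atMost)
  ultimately show "av ((\<Sum>i<n. g i * x ^ i) - (\<Sum>i\<le>m. g i * x ^ i)) \<le> B * \<rho> ^ Suc m"
    using av_sum_le[of "{Suc m..<n}" "B * \<rho> ^ Suc m" "\<lambda>i. g i * x ^ i"] assms(4,6) by simp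
qed

lemma av_partial_sum_diff_le:
  assumes "av x \<le> t" "av y \<le> t" "0 < t" and "\<And>i. av (g i) * t ^ i \<le> M"
  shows "av ((\<Sum>i\<le>m. g i * x ^ i) - (\<Sum>i\<le>m. g i * y ^ i)) \<le> M / t * av (x - y)"
proof -
  have "av (g i * (x ^ i - y ^ i)) \<le> M / t * av (x - y)" for i
  proof -
    have "av (g i * (x ^ i - y ^ i)) * t \<le> av (g i) * (av (x - y) * t ^ i)"
      using av_power_diff_le[OF assms(1,2)] by (simp add: av_mult mult.assoc mult_left_mono)
    also have "\<dots> \<le> M * av (x - y)"
      using mult_right_mono[OF assms(4)[of i] av_nonneg[of "x - y"]] by (simp add: algebra_simps)
    finally show ?thesis
      using assms(3) by (simp add: pos_le_divide_eq mult.commute)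
  qed
  moreover have "0 \<le> M"
    using assms(4)[of 0, simplified] av_nonneg[of "g 0"] by linarith
  moreover have "(\<Sum>i\<le>m. g i * x ^ i) - (\<Sum>i\<le>m. g i * y ^ i) = (\<Sum>i\<le>m. g i * (x ^ i - y ^ i))"
    by (simp add: sum_subtractf right_diff_distrib)
  ultimately show ?thesis
    using av_sum_le[of "{..m}" "M / t * av (x - y)" "\<lambda>i. g i * (x ^ i - y ^ i)"] assms(3) by simp
qed

lemma sums_v_minus_linear_le:
  assumes S: "sums_v av (\<lambda>i. g i * x ^ i) S" and S': "sums_v av (\<lambda>i. g i * y ^ i) S'"
    and "av x \<le> s" "av y \<le> s" "0 < s" and M: "\<And>i. 2 \<le> i \<Longrightarrow> av (g i) * s ^ (i - 1) \<le> M"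
  shows "av (S - S' - g 1 * (x - y)) \<le> M * av (x - y)"
proof -
  define f where "f = (\<lambda>i. g i * x ^ i - g i * y ^ i)"
  have f_le: "av (f i) \<le> M * av (x - y)" if "2 \<le> i" for i
  proof -
    have "s ^ i = s ^ (i - 1) * s"
      using that by (cases i) (simp_all add: mult.commute)
    then have "av (x ^ i - y ^ i) * s \<le> av (x - y) * s ^ (i - 1) * s"
      using av_power_diff_le[OF assms(3,4), of i] by simp
    then have "av (x ^ i - y ^ i) \<le> av (x - y) * s ^ (i - 1)"
      using assms(5) by simp
    have "av (f i) = av (g i) * av (x ^ i - y ^ i)"
      by (simp add: f_def av_mult flip: right_diff_distrib)
    also have "\<dots> \<le> av (g i) * (av (x - y) * s ^ (i - 1))"
      using \<open>av (x ^ i - y ^ i) \<le> av (x - y) * s ^ (i - 1)\<close> by (rule mult_left_mono) simp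
    also have "\<dots> = (av (g i) * s ^ (i - 1)) * av (x - y)"
      by (simp add: mult_ac)
    also have "\<dots> \<le> M * av (x - y)"
      using M[OF that] by (rule mult_right_mono) simp
    finally show ?thesis .
  qed
  have "0 \<le> av (g 2) * s ^ (2 - 1)"
    using assms(5) by simp
  then have "0 \<le> M"
    using M[of 2] by linarith
  have "sum f {..<2} = g 1 * (x - y)"
    by (simp add: f_def numeral_2_eq_2 algebra_simps)
  then have "av (sum f {..<n} - g 1 * (x - y)) \<le> M * av (x - y)" if "2 \<le> n" for n
  proof -
    have "sum f {..<n} - g 1 * (x - y) = sum f {2..<n}"
      using sum_diff_nat_ivl[of 0 2 n f] that \<open>sum f {..<2} = g 1 * (x - y)\<close>
      by (simp add: atLeast0LessThan)
    then show ?thesis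
      using av_sum_le[of "{2..<n}" "M * av (x - y)" f] f_le \<open>0 \<le> M\<close> by simp
  qed
  then show ?thesis
    using sums_v_le[OF sums_v_diff[OF S S', folded f_def]] by blast
qed

lemma av_coeff_shifted_partial_sum:
  assumes "0 < t" "av \<alpha> \<le> t" "N \<le> n" "g N \<noteq> 0"
    and dom: "\<And>j. N < j \<Longrightarrow> av (g j) * t ^ j < av (g N) * t ^ N"
  shows "av (coeff (shifted_partial_sum g \<alpha> n) N) = av (g N)"
proof -
  let ?C = "\<lambda>j. g j * coeff ([:\<alpha>, 1:] ^ j) N"
  have "coeff (shifted_partial_sum g \<alpha> n) N = ?C N + sum ?C ({..n} - {N})"
    unfolding coeff_shifted_partial_sum using assms(3) by (intro sum.remove) auto
  then have split: "coeff (shifted_partial_sum g \<alpha> n) N = g N + sum ?C ({..n} - {N})"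
    by (simp add: coeff_linear_poly_power')
  have "av (?C j) < av (g N)" if "j \<in> {..n} - {N}" for j
  proof (cases "N < j")
    case True
    have "av (?C j) = av (g j) * (av (of_nat (j choose N) :: 'a) * av \<alpha> ^ (j - N))"
      using True by (simp add: coeff_linear_poly_power' av_mult)
    also have "\<dots> \<le> av (g j) * (1 * t ^ (j - N))"
      using av_of_nat_le_1 assms(2) by (intro mult_left_mono mult_mono power_mono) auto
    also have "\<dots> < av (g N)"
    proof -
      have "t ^ (j - N) * t ^ N = t ^ j"
        using True by (simp add: power_add[symmetric])
      then have "av (g j) * t ^ (j - N) * t ^ N < av (g N) * t ^ N"
        using dom[OF True] by (simp add: mult.assoc)
      then show ?thesis
        using assms(1) by (simp add: mult_less_cancel_right)
    qed
    finally show ?thesis .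
  next
    case False
    then have "j < N"
      using that by auto
    then show ?thesis
      using assms(4) av_pos by (simp add: coeff_linear_poly_power')
  qed
  then have "av (sum ?C ({..n} - {N})) < av (g N)"
    using assms(4) av_pos by (intro av_sum_less) auto
  then show ?thesis
    unfolding split by (rule av_add_eq_left)
qed

lemma av_of_nat_prime_eq_1:
  assumes "prime p" "prime q" "p \<noteq> q" "av (of_nat p) < 1"
  shows "av (of_nat q) = 1"
proof -
  have "coprime (int p) (int q)"
    using primes_coprime[OF assms(1-3)] by simp
  then obtain u v where "u * int p + v * int q = 1"
    using bezout_int by (metis coprime_imp_gcd_eq_1)
  then have "(of_int (u * int p + v * int q) :: 'a) = 1"
    by simp
  then have "1 = av (of_int u * of_nat p + of_int v * (of_nat q :: 'a))"
    by simp
  also have "\<dots> \<le> max (av (of_int u :: 'a) * av (of_nat p :: 'a)) (av (of_int v :: 'a) * av (of_nat q :: 'a))"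
    by (metis av_add_le av_mult)
  also have "\<dots> \<le> max (av (of_nat p :: 'a)) (av (of_nat q :: 'a))"
    using av_of_int_le_1[of u] av_of_int_le_1[of v] by (intro max.mono mult_left_le_one_le) auto
  finally show ?thesis
    using assms(4) av_of_nat_le_1[of q] by linarith
qed

lemma residue_char_eqI:
  assumes "prime p" "av (of_nat p) < 1"
  shows "residue_char av = p"
proof -
  have "(THE p. prime p \<and> av (of_nat p :: 'a) < 1) = p"
  proof (rule the_equality)
    fix p' assume p': "prime p' \<and> av (of_nat p' :: 'a) < 1"
    show "p' = p"
    proof (rule ccontr)
      assume "p' \<noteq> p"
      then have "av (of_nat p' :: 'a) = 1"
        using av_of_nat_prime_eq_1[OF assms(1), of p'] p' assms(2) by auto
      with p' show False
        by simp
    qed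
  qed (use assms in simp)
  moreover have "\<exists>p. prime p \<and> av (of_nat p :: 'a) < 1"
    using assms by blast
  ultimately show ?thesis
    unfolding residue_char_def by (simp only: if_True)
qed

lemma residue_char_pos_imp:
  assumes "0 < residue_char av"
  shows "prime (residue_char av)" "av (of_nat (residue_char av)) < 1"
proof -
  have "\<exists>p. prime p \<and> av (of_nat p :: 'a) < 1"
  proof (rule ccontr)
    assume "\<nexists>p. prime p \<and> av (of_nat p :: 'a) < 1"
    then have "residue_char av = 0"
      unfolding residue_char_def by (simp only: if_False)
    with assms show False
      by simp
  qed
  then obtain p where "prime p" "av (of_nat p :: 'a) < 1"
    by blast
  then show "prime (residue_char av)" "av (of_nat (residue_char av)) < 1"
    using residue_char_eqI by auto
qed

lemma av_of_nat_prime_other: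
  assumes "prime q" "q \<noteq> residue_char av"
  shows "av (of_nat q) = 1"
proof (rule ccontr)
  assume "av (of_nat q) \<noteq> 1"
  then have "av (of_nat q :: 'a) < 1"
    using av_of_nat_le_1[of q] by linarith
  then show False
    using residue_char_eqI[OF assms(1)] assms(2) by simp
qed

lemma kappa_pos: "0 < kappa av"
  and kappa_le_1: "kappa av \<le> 1"
proof -
  let ?p = "residue_char av"
  have "0 < kappa av \<and> kappa av \<le> 1"
  proof (cases "0 < ?p")
    case True
    then have "0 < av (of_nat ?p :: 'a)" "av (of_nat ?p :: 'a) < 1" "2 \<le> ?p"
      using residue_char_pos_imp[OF True] prime_ge_2_nat av_pos by auto
    moreover have "kappa av = av (of_nat ?p) powr (1 / (real ?p - 1))"
      using True by (simp add: kappa_def Let_def)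
    ultimately show ?thesis
      by (simp add: powr_le1)
  qed (simp add: kappa_def)
  then show "0 < kappa av" "kappa av \<le> 1"
    by auto
qed

lemma kappa_power_residue_char:
  assumes "0 < residue_char av"
  shows "kappa av ^ (residue_char av - 1) = av (of_nat (residue_char av))"
proof -
  let ?p = "residue_char av"
  have "0 < av (of_nat ?p :: 'a)" "2 \<le> ?p"
    using residue_char_pos_imp[OF assms] prime_ge_2_nat av_pos by auto
  then have "kappa av ^ (?p - 1) = av (of_nat ?p) powr (1 / (real ?p - 1) * real (?p - 1))"
    using assms by (simp add: kappa_def Let_def powr_realpow[symmetric] powr_powr)
  also have "1 / (real ?p - 1) * real (?p - 1) = 1"
    using \<open>2 \<le> ?p\<close> by (simp add: of_nat_diff)
  finally show ?thesis
    using \<open>0 < av (of_nat ?p :: 'a)\<close> by simp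
qed

lemma kappa_power_le_av_prime:
  assumes "prime q"
  shows "kappa av ^ (q - 1) \<le> av (of_nat q)"
proof (cases "0 < residue_char av \<and> q = residue_char av")
  case False
  then have "av (of_nat q :: 'a) = 1"
    using assms av_of_nat_prime_other by auto
  then show ?thesis
    using kappa_pos kappa_le_1 by (simp add: power_le_one)
qed (use kappa_power_residue_char in auto)

lemma kappa_power_le_av_of_nat:
  "1 \<le> n \<Longrightarrow> kappa av ^ (n - 1) \<le> av (of_nat n)"
proof (induction n rule: less_induct)
  case (less n)
  show ?case
  proof (cases "n = 1")
    case False
    then obtain q where q: "prime q" "q dvd n"
      using prime_factor_nat by blast
    then obtain m where n: "n = q * m"
      by (elim dvdE)
    have "2 \<le> q"
      using q(1) prime_ge_2_nat by blast
    have "1 \<le> m"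
      using n less.prems by (cases "m = 0") auto
    have "m < n"
      using mult_less_mono1[of 1 q m] \<open>2 \<le> q\<close> \<open>1 \<le> m\<close> n by simp
    have "q * m = q * (m - 1) + q" "m - 1 \<le> q * (m - 1)"
      using \<open>1 \<le> m\<close> \<open>2 \<le> q\<close> by (cases m, simp_all)+
    then have "q - 1 + (m - 1) \<le> n - 1"
      using n \<open>2 \<le> q\<close> by linarith
    then have "kappa av ^ (n - 1) \<le> kappa av ^ (q - 1) * kappa av ^ (m - 1)"
      unfolding power_add[symmetric] using kappa_pos kappa_le_1 by (intro power_decreasing) auto
    also have "\<dots> \<le> av (of_nat q :: 'a) * av (of_nat m :: 'a)"
      using kappa_power_le_av_prime[OF q(1)] less.IH[OF \<open>m < n\<close> \<open>1 \<le> m\<close>] kappa_pos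
      by (intro mult_mono) auto
    finally show ?thesis
      by (simp add: n av_mult)
  qed simp
qed

end

section \<open>Complete algebraically closed fields\<close>

locale Cv_valuation =
  fixes av :: "'a::field_char_0 \<Rightarrow> real"
  assumes Cv_field: "Cv_field av"
begin

sublocale nonarch_valuation
  using Cv_field unfolding Cv_field_def by unfold_locales auto

lemma av_cauchy_convergent:
  assumes "\<And>e. e > 0 \<Longrightarrow> \<exists>N. \<forall>m\<ge>N. \<forall>n\<ge>N. av (X m - X n) < e"
  shows "\<exists>L. (\<lambda>n. av (X n - L)) \<longlonglongrightarrow> 0"
  using Cv_field assms unfolding Cv_field_def complete_abs_def by blast

lemma av_convergent_if_steps_le:
  assumes steps: "\<And>k. av (X (Suc k) - X k) \<le> D k" and "decseq D" "D \<longlonglongrightarrow> 0"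
  shows "\<exists>L. (\<lambda>n. av (X n - L)) \<longlonglongrightarrow> 0"
proof (rule av_cauchy_convergent)
  have bound: "av (X m - X k) \<le> D k" if "k \<le> m" for k m
    using that
  proof (induction m rule: dec_induct)
    case base
    show ?case
      using decseq_ge[OF assms(2,3)] by simp
  next
    case (step m)
    have "av (X (Suc m) - X k) \<le> max (av (X (Suc m) - X m)) (av (X m - X k))"
      by (rule av_diff_triangle)
    also have "\<dots> \<le> D k"
      using steps[of m] step.IH decseqD[OF assms(2) step.hyps(1)] by simp
    finally show ?case .
  qed
  fix e :: real assume "e > 0"
  then obtain N where "\<forall>n\<ge>N. norm (D n - 0) < e"
    using LIMSEQ_D[OF assms(3)] by blast
  then have N: "D N < e"
    by auto
  have "av (X m - X n) < e" if "m \<ge> N" "n \<ge> N" for m n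
  proof -
    have "av (X m - X n) \<le> max (av (X m - X N)) (av (X n - X N))"
      using av_diff_triangle[of "X m" "X n" "X N"] av_minus_commute[of "X N" "X n"] by simp
    also have "\<dots> \<le> D N"
      using bound that by simp
    finally show ?thesis
      using N by simp
  qed
  then show "\<exists>N. \<forall>m\<ge>N. \<forall>n\<ge>N. av (X m - X n) < e"
    by blast
qed

lemma sums_v_exists_if_terms_tendsto_0:
  assumes "(\<lambda>n. av (f n)) \<longlonglongrightarrow> 0"
  shows "\<exists>s. sums_v av f s"
  unfolding sums_v_def
proof (rule av_cauchy_convergent)
  fix e :: real assume "e > 0"
  then obtain N where "\<forall>n\<ge>N. norm (av (f n) - 0) < e"
    using LIMSEQ_D[OF assms] by blast
  then have N: "\<And>n. n \<ge> N \<Longrightarrow> av (f n) < e"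
    by auto
  have *: "av (sum f {..<m} - sum f {..<n}) < e" if "n \<le> m" "N \<le> n" for m n
  proof -
    have "sum f {..<m} - sum f {..<n} = sum f {n..<m}"
      using sum_diff_nat_ivl[of 0 n m f] that by (simp add: atLeast0LessThan)
    then show ?thesis
      using av_sum_less[of "{n..<m}" e f] N that \<open>e > 0\<close> by simp
  qed
  have "av (sum f {..<m} - sum f {..<n}) < e" if "m \<ge> N" "n \<ge> N" for m n
    using *[of n m] *[of m n] that av_minus_commute[of "sum f {..<m}"] by (cases "n \<le> m") auto
  then show "\<exists>N. \<forall>m\<ge>N. \<forall>n\<ge>N. av (sum f {..<m} - sum f {..<n}) < e"
    by blast
qed

lemma sums_v_ps_deriv_exists:
  assumes "sums_v av (\<lambda>i. c i * w ^ i) s"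
  shows "\<exists>s'. sums_v av (\<lambda>i. ps_deriv c i * w ^ i) s'"
proof (rule sums_v_exists_if_terms_tendsto_0)
  show "(\<lambda>i. av (ps_deriv c i * w ^ i)) \<longlonglongrightarrow> 0"
  proof (cases "w = 0")
    case True
    have "(\<lambda>i. av (ps_deriv c (Suc i) * w ^ Suc i)) \<longlonglongrightarrow> 0"
      using True by simp
    then show ?thesis
      by (rule LIMSEQ_imp_Suc)
  next
    case False
    let ?u = "\<lambda>i. av (c (Suc i) * w ^ Suc i) / av w"
    have "?u \<longlonglongrightarrow> 0 / av w"
      using LIMSEQ_Suc[OF sums_v_terms_tendsto_0[OF assms]] False by (intro tendsto_divide) auto
    moreover have "av (ps_deriv c i * w ^ i) \<le> ?u i" for i
    proof -
      have "av (ps_deriv c i * w ^ i) = av (of_nat (Suc i) :: 'a) * (av (c (Suc i)) * av w ^ i)"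
        unfolding ps_deriv_def by (simp add: av_mult)
      also have "\<dots> \<le> av (c (Suc i)) * av w ^ i"
        using av_of_nat_le_1[of "Suc i"] by (intro mult_left_le_one_le) (simp_all del: of_nat_Suc)
      also have "\<dots> = ?u i"
        using False by (simp add: av_mult)
      finally show ?thesis .
    qed
    ultimately show ?thesis
      using tendsto_sandwich[of "\<lambda>_. 0" "\<lambda>i. av (ps_deriv c i * w ^ i)" sequentially ?u 0] by simp
  qed
qed

lemma contraction_has_fixpoint:
  assumes "0 \<le> q" "q < 1" "0 \<le> s"
    and maps: "\<And>z. av (z - a) \<le> s \<Longrightarrow> av (T z - a) \<le> s"
    and lip: "\<And>z w. av (z - a) \<le> s \<Longrightarrow> av (w - a) \<le> s \<Longrightarrow> av (T z - T w) \<le> q * av (z - w)"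
  shows "\<exists>L. av (L - a) \<le> s \<and> T L = L"
proof -
  define X where "X k = (T ^^ k) a" for k
  have X_Suc: "X (Suc k) = T (X k)" for k
    by (simp add: X_def)
  have X_in: "av (X k - a) \<le> s" for k
    by (induction k) (simp_all add: X_Suc maps assms(3), simp add: X_def assms(3))
  have X_step: "av (X (Suc k) - X k) \<le> q ^ k * s" for k
  proof (induction k)
    case 0
    show ?case
      using X_in[of 1] by (simp add: X_def)
  next
    case (Suc k)
    have "av (X (Suc (Suc k)) - X (Suc k)) \<le> q * av (X (Suc k) - X k)"
      using lip[OF X_in[of "Suc k"] X_in[of k]] by (simp add: X_Suc)
    also have "\<dots> \<le> q * (q ^ k * s)"
      using Suc.IH assms(1) by (rule mult_left_mono)
    finally show ?case
      by (simp add: mult.assoc)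
  qed
  have "decseq (\<lambda>k. q ^ k * s)"
    using assms(1-3) by (auto simp: decseq_def intro!: mult_right_mono power_decreasing)
  moreover have "(\<lambda>k. q ^ k * s) \<longlonglongrightarrow> 0 * s"
    using assms(1,2) by (intro tendsto_mult tendsto_const LIMSEQ_power_zero) auto
  ultimately obtain L where L: "(\<lambda>n. av (X n - L)) \<longlonglongrightarrow> 0"
    using av_convergent_if_steps_le[of X "\<lambda>k. q ^ k * s", OF X_step] by auto
  have L_in: "av (L - a) \<le> s"
    using av_limit_le[OF L, of 0 a s] X_in by simp
  have "av (T L - L) \<le> q * av (X k - L) + av (X (Suc k) - L)" for k
  proof -
    have "av (T L - L) \<le> max (av (T L - T (X k))) (av (X (Suc k) - L))"
      using av_diff_triangle[of "T L" L "T (X k)"] by (simp add: X_Suc)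
    moreover have "av (T L - T (X k)) \<le> q * av (X k - L)"
      using lip[OF L_in X_in[of k]] av_minus_commute[of L "X k"] by simp
    moreover have "0 \<le> q * av (X k - L)"
      using assms(1) by simp
    ultimately show ?thesis
      using av_nonneg[of "X (Suc k) - L"] by (simp del: av_nonneg)
  qed
  moreover have "(\<lambda>k. q * av (X k - L) + av (X (Suc k) - L)) \<longlonglongrightarrow> q * 0 + 0"
    by (intro tendsto_add tendsto_mult tendsto_const L LIMSEQ_Suc[OF L])
  ultimately have "av (T L - L) \<le> 0"
    using LIMSEQ_le_const[of _ 0 "av (T L - L)"] by simp
  then show ?thesis
    using L_in av_nonneg[of "T L - L"] by auto
qed

lemma poly_has_root: "0 < degree (p :: 'a poly) \<Longrightarrow> \<exists>x. poly p x = 0"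
  using Cv_field unfolding Cv_field_def alg_closed_def by blast

lemma av_coeff_linear_factor_le:
  assumes "0 < s" "s \<le> av \<alpha>" and R: "\<And>i. av (coeff R i) * s ^ i \<le> av (coeff R 0)"
  shows "av (coeff ([:-\<alpha>, 1:] * R) k) * s ^ k \<le> av (coeff ([:-\<alpha>, 1:] * R) 0)"
proof -
  let ?P = "[:-\<alpha>, 1:] * R"
  have coeff_P: "coeff ?P i = (case i of 0 \<Rightarrow> 0 | Suc j \<Rightarrow> coeff R j) - \<alpha> * coeff R i" for i
    by (simp add: mult_pCons_left coeff_pCons split: nat.split)
  have P0: "av (coeff ?P 0) = av \<alpha> * av (coeff R 0)"
    using coeff_P[of 0] by (simp add: av_mult)
  show ?thesis
  proof (cases k)
    case (Suc j)
    have "av (coeff ?P k) \<le> max (av (coeff R j)) (av (\<alpha> * coeff R k))"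
      using coeff_P[of k] Suc av_diff_le by simp
    then have "av (coeff ?P k) * s ^ k \<le> max (av (coeff R j)) (av (\<alpha> * coeff R k)) * s ^ k"
      using assms(1) by (simp add: mult_right_mono)
    also have "\<dots> = max (av (coeff R j) * s ^ k) (av (\<alpha> * coeff R k) * s ^ k)"
      using assms(1) by (simp add: max_mult_distrib_right)
    also have "\<dots> \<le> av (coeff ?P 0)"
    proof (rule max.boundedI)
      have "av (coeff R j) * s ^ k = (av (coeff R j) * s ^ j) * s"
        using Suc by (simp add: algebra_simps)
      also have "\<dots> \<le> av (coeff R 0) * av \<alpha>"
        using R[of j] assms(1,2) by (intro mult_mono) auto
      finally show "av (coeff R j) * s ^ k \<le> av (coeff ?P 0)"
        unfolding P0 by (simp add: mult.commute)
      have "av (\<alpha> * coeff R k) * s ^ k = av \<alpha> * (av (coeff R k) * s ^ k)"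
        by (simp add: av_mult)
      also have "\<dots> \<le> av \<alpha> * av (coeff R 0)"
        using R[of k] by (intro mult_left_mono) auto
      finally show "av (\<alpha> * coeff R k) * s ^ k \<le> av (coeff ?P 0)"
        unfolding P0 .
    qed
    finally show ?thesis .
  qed simp
qed

lemma coeff_le_if_roots_large:
  assumes "0 < s" and "\<And>\<beta>. poly P \<beta> = 0 \<Longrightarrow> s \<le> av \<beta>"
  shows "av (coeff P k) * s ^ k \<le> av (coeff P 0)"
  using assms(2)
proof (induction "degree P" arbitrary: P k rule: less_induct)
  case less
  show ?case
  proof (cases "degree P = 0")
    case True
    then show ?thesis
      by (cases k) (auto simp: coeff_eq_0)
  next
    case False
    then obtain \<alpha> where "poly P \<alpha> = 0"
      using poly_has_root by blast
    then obtain R where R: "P = [:-\<alpha>, 1:] * R"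
      using poly_eq_0_iff_dvd by (metis dvdE)
    have "R \<noteq> 0"
      using R False by auto
    then have "degree R < degree P"
      unfolding R by (subst degree_mult_eq) auto
    then have "av (coeff R i) * s ^ i \<le> av (coeff R 0)" for i
      using less.hyps[of R] less.prems unfolding R by auto
    then show ?thesis
      unfolding R using av_coeff_linear_factor_le assms(1) less.prems \<open>poly P \<alpha> = 0\<close> by blast
  qed
qed

lemma poly_has_small_root:
  assumes "0 < s" and "av (coeff P 0) < av (coeff P k) * s ^ k"
  shows "\<exists>\<beta>. poly P \<beta> = 0 \<and> av \<beta> < s"
  using coeff_le_if_roots_large[OF assms(1), of P k] assms(2) by force

lemma exists_power_eq: "0 < n \<Longrightarrow> \<exists>y. y ^ n = (w::'a)"
proof -
  assume "0 < n"
  let ?p = "[:- w:] + monom 1 n"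
  have "degree ?p = n"
    using \<open>0 < n\<close> by (subst degree_add_eq_right) (auto simp: degree_monom_eq)
  then obtain y where "poly ?p y = 0"
    using poly_has_root[of ?p] \<open>0 < n\<close> by auto
  then show ?thesis
    by (auto simp: poly_monom)
qed

lemma exists_av_gt_1: "\<exists>x. 1 < av x"
proof -
  obtain x0 where x0: "x0 \<noteq> 0" "av x0 \<noteq> 1"
    using Cv_field unfolding Cv_field_def nontrivial_abs_def by auto
  show ?thesis
  proof (cases "1 < av x0")
    case False
    then have "av x0 < 1" "0 < av x0"
      using x0 av_pos[of x0] by auto
    then have "1 < av (1 / x0)"
      by (simp add: field_simps)
    then show ?thesis
      by blast
  qed blast
qed

lemma exists_av_eq_powr:
  assumes "x \<noteq> 0" "\<rho> \<in> \<rat>"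
  shows "\<exists>y. av y = av x powr \<rho>"
proof -
  obtain k b where kb: "0 < b" "\<rho> = of_int k / of_int b"
    using Rats_cases' assms(2) by metis
  define w where "w = (if 0 \<le> k then x ^ nat k else (1 / x) ^ nat (- k))"
  have "w \<noteq> 0"
    using assms(1) by (auto simp: w_def)
  have "0 < av x"
    using assms(1) av_pos by blast
  have av_w: "av w = av x powr k"
  proof (cases "0 \<le> k")
    case True
    then show ?thesis
      using \<open>0 < av x\<close> by (simp add: w_def powr_realpow[symmetric])
  next
    case False
    then have "av w = 1 / av x powr (- k)"
      using \<open>0 < av x\<close> by (simp add: w_def power_one_over powr_realpow[symmetric])
    then show ?thesis
      using powr_minus_divide[of "av x" "- k"] by simp
  qed
  obtain y where y: "y ^ nat b = w"
    using exists_power_eq[of "nat b" w] kb(1) by auto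
  then have "0 < av y"
    using \<open>w \<noteq> 0\<close> kb(1) av_pos by fastforce
  have "av y powr b = av y ^ nat b"
    using \<open>0 < av y\<close> kb(1) by (simp add: powr_realpow[symmetric])
  also have "\<dots> = av x powr k"
    using y av_w by (simp flip: av_power)
  finally have "(av y powr b) powr (1 / b) = (av x powr k) powr (1 / b)"
    by simp
  then have "av y = av x powr \<rho>"
    using kb \<open>0 < av y\<close> by (simp add: powr_powr)
  then show ?thesis
    by blast
qed

lemma exists_av_between:
  assumes "0 < t" "t < r"
  shows "\<exists>x. t < av x \<and> av x < r"
proof -
  obtain x1 where "1 < av x1"
    using exists_av_gt_1 by blast
  then have "x1 \<noteq> 0" "0 < ln (av x1)"
    by auto
  then have "ln t / ln (av x1) < ln r / ln (av x1)"
    using assms by (simp add: divide_strict_right_mono)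
  then obtain \<rho> where "\<rho> \<in> \<rat>" "ln t / ln (av x1) < \<rho>" "\<rho> < ln r / ln (av x1)"
    using Rats_dense_in_real by blast
  then obtain y where y: "av y = av x1 powr \<rho>"
    using exists_av_eq_powr \<open>x1 \<noteq> 0\<close> by blast
  then have "ln (av y) = \<rho> * ln (av x1)"
    using \<open>1 < av x1\<close> by (simp add: ln_powr)
  moreover have "ln t < \<rho> * ln (av x1)" "\<rho> * ln (av x1) < ln r"
    using \<open>ln t / ln (av x1) < \<rho>\<close> \<open>\<rho> < ln r / ln (av x1)\<close> \<open>0 < ln (av x1)\<close>
    by (auto simp: field_simps)
  moreover have "0 < av y"
    using y \<open>x1 \<noteq> 0\<close> by simp
  ultimately show ?thesis
    using assms by (metis ln_less_cancel_iff order.strict_trans)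
qed

subsection \<open>Zero-free series\<close>

lemma partial_sum_has_small_root:
  assumes "0 < t" "N \<le> n" "av (g 0) < av (g N) * t ^ N"
  shows "\<exists>\<alpha>. (\<Sum>i\<le>n. g i * \<alpha> ^ i) = 0 \<and> av \<alpha> < t"
proof -
  have "av (coeff (shifted_partial_sum g 0 n) 0) < av (coeff (shifted_partial_sum g 0 n) N) * t ^ N"
    using assms by (simp add: coeff_shifted_partial_sum_0)
  then obtain \<alpha> where "poly (shifted_partial_sum g 0 n) \<alpha> = 0" "av \<alpha> < t"
    using poly_has_small_root[OF assms(1)] by blast
  then show ?thesis
    by (auto simp: poly_shifted_partial_sum)
qed

lemma partial_sum_root_step:
  assumes "0 < \<sigma>" "\<sigma> \<le> t" "N \<le> n"
    and dom: "\<And>j. N < j \<Longrightarrow> av (g j) * t ^ j < av (g N) * t ^ N"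
    and small: "av (g (Suc n)) * t ^ Suc n < av (g N) * \<sigma> ^ N"
    and \<alpha>: "av \<alpha> \<le> t" "(\<Sum>i\<le>n. g i * \<alpha> ^ i) = 0"
  shows "\<exists>\<beta>. (\<Sum>i\<le>Suc n. g i * \<beta> ^ i) = 0 \<and> av (\<beta> - \<alpha>) < \<sigma> \<and> av \<beta> \<le> t"
proof -
  let ?Q = "shifted_partial_sum g \<alpha> (Suc n)"
  have "0 \<le> av (g (Suc n)) * t ^ Suc n"
    using assms(1,2) by simp
  then have "g N \<noteq> 0"
    using small by auto
  have "coeff ?Q 0 = g (Suc n) * \<alpha> ^ Suc n"
    using poly_shifted_partial_sum[of g \<alpha> "Suc n" 0] \<alpha>(2) by (simp add: poly_0_coeff_0)
  then have "av (coeff ?Q 0) = av (g (Suc n)) * av \<alpha> ^ Suc n"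
    by (simp add: av_mult)
  also have "\<dots> \<le> av (g (Suc n)) * t ^ Suc n"
    using \<alpha>(1) by (intro mult_left_mono power_mono) auto
  also have "\<dots> < av (coeff ?Q N) * \<sigma> ^ N"
    using small av_coeff_shifted_partial_sum[OF _ \<alpha>(1) le_SucI[OF assms(3)] \<open>g N \<noteq> 0\<close> dom] assms(1,2) by simp
  finally obtain y where y: "poly ?Q y = 0" "av y < \<sigma>"
    using poly_has_small_root[OF assms(1)] by blast
  have "av (\<alpha> + y) \<le> t"
    using av_add_le[of \<alpha> y] \<alpha>(1) y(2) assms(2) by simp
  then show ?thesis
    using y by (intro exI[of _ "\<alpha> + y"]) (simp add: poly_shifted_partial_sum)
qed

lemma partial_sum_roots_converge:
  assumes "0 < t" "0 < B" "0 < \<rho>" "\<rho> < 1"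
    and bound: "\<And>i. av (g i) * t ^ i \<le> B * \<rho> ^ i"
    and dom: "\<And>i. N < i \<Longrightarrow> av (g i) * t ^ i < av (g N) * t ^ N"
    and big: "av (g 0) < av (g N) * t ^ N"
  obtains \<alpha> L n0 where "\<And>k. (\<Sum>i\<le>k + n0. g i * \<alpha> k ^ i) = 0" "\<And>k. av (\<alpha> k) \<le> t"
    "(\<lambda>k. av (\<alpha> k - L)) \<longlonglongrightarrow> 0"
proof -
  have "0 < av (g N) * t ^ N"
    using big av_nonneg[of "g 0"] by linarith
  then have "0 < av (g N)"
    using assms(1) by (simp add: zero_less_mult_iff)
  have "0 < N"
    using big by (intro Nat.gr0I) simp
  \<comment> \<open>On radius \<open>\<sigma> n\<close> the \<open>N\<close>-th coefficient beats the new top term of the partial sum.\<close>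
  obtain \<sigma> where \<sigma>_pos: "\<And>n. 0 < \<sigma> n" and \<sigma>_pow: "\<And>n. \<sigma> n ^ N = 2 * B / av (g N) * \<rho> ^ Suc n"
    and "decseq \<sigma>" and \<sigma>_lim: "\<sigma> \<longlonglongrightarrow> 0"
    using exists_root_radii[of N "2 * B / av (g N)" \<rho>] assms(2-4) \<open>0 < av (g N)\<close> \<open>0 < N\<close> by auto
  have small: "av (g (Suc n)) * t ^ Suc n < av (g N) * \<sigma> n ^ N" for n
  proof -
    have "av (g N) * \<sigma> n ^ N = 2 * B * \<rho> ^ Suc n"
      using \<open>0 < av (g N)\<close> by (auto simp: \<sigma>_pow)
    moreover have "0 < B * \<rho> ^ Suc n"
      using assms(2,3) by simp
    ultimately show ?thesis
      using bound[of "Suc n"] by linarith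
  qed
  obtain n0 where "N \<le> n0" and \<sigma>_le: "\<And>n. n0 \<le> n \<Longrightarrow> \<sigma> n \<le> t"
  proof -
    obtain n1 where "\<forall>n\<ge>n1. norm (\<sigma> n - 0) < t"
      using LIMSEQ_D[OF \<sigma>_lim assms(1)] by blast
    then show ?thesis
      using that[of "max n1 N"] by fastforce
  qed
  let ?root = "\<lambda>k x. (\<Sum>i\<le>k + n0. g i * x ^ i) = 0 \<and> av x \<le> t"
  obtain \<alpha> where \<alpha>: "\<And>k. ?root k (\<alpha> k)" and step: "\<And>k. av (\<alpha> (Suc k) - \<alpha> k) < \<sigma> (k + n0)"
  proof -
    have "\<exists>x. ?root 0 x"
      using partial_sum_has_small_root[OF assms(1) \<open>N \<le> n0\<close>] big by fastforce
    moreover have "\<exists>y. ?root (Suc k) y \<and> av (y - x) < \<sigma> (k + n0)" if "?root k x" for k x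
      using partial_sum_root_step[OF \<sigma>_pos \<sigma>_le _ dom small, of "k + n0" x] \<open>N \<le> n0\<close> that by auto
    ultimately show ?thesis
      using dependent_nat_choice[of ?root "\<lambda>k x y. av (y - x) < \<sigma> (k + n0)"] that by blast
  qed
  have "decseq (\<lambda>k. \<sigma> (k + n0))" "(\<lambda>k. \<sigma> (k + n0)) \<longlonglongrightarrow> 0"
    using \<open>decseq \<sigma>\<close> LIMSEQ_ignore_initial_segment[OF \<sigma>_lim] by (auto simp: decseq_def)
  then obtain L where "(\<lambda>k. av (\<alpha> k - L)) \<longlonglongrightarrow> 0"
    using av_convergent_if_steps_le[of \<alpha>] step less_imp_le by metis
  then show ?thesis
    using that \<alpha> by blast
qed

lemma partial_sum_roots_limit_is_zero:
  assumes G: "sums_v av (\<lambda>i. g i * L ^ i) G" and "0 < t" "av L \<le> t"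
    and bound: "\<And>i. av (g i) * t ^ i \<le> B * \<rho> ^ i" and "0 \<le> \<rho>" "\<rho> < 1"
    and roots: "\<And>k. (\<Sum>i\<le>k + n0. g i * \<alpha> k ^ i) = 0" "\<And>k. av (\<alpha> k) \<le> t"
    and lim: "(\<lambda>k. av (\<alpha> k - L)) \<longlonglongrightarrow> 0"
  shows "G = 0"
proof -
  have "0 \<le> B"
    using bound[of 0] av_nonneg[of "g 0"] by (simp del: av_nonneg)
  have "B * \<rho> ^ i \<le> B" for i
    using \<open>0 \<le> B\<close> assms(5,6) by (simp add: mult_left_le power_le_one)
  then have bound1: "av (g i) * t ^ i \<le> B" for i
    by (rule order_trans[OF bound])
  let ?P = "\<lambda>k x. \<Sum>i\<le>k + n0. g i * x ^ i"
  have "av G \<le> B * \<rho> ^ Suc (k + n0) + B / t * av (\<alpha> k - L)" for k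
  proof -
    have "G = (G - ?P k L) + (?P k L - ?P k (\<alpha> k))"
      using roots(1)[of k] by simp
    then have "av G \<le> max (av (G - ?P k L)) (av (?P k L - ?P k (\<alpha> k)))"
      by (metis av_add_le)
    also have "\<dots> \<le> max (B * \<rho> ^ Suc (k + n0)) (B / t * av (L - \<alpha> k))"
      using av_sum_tail_le[OF G assms(3) bound assms(5) _ \<open>0 \<le> B\<close>, of "k + n0"] assms(6)
        av_partial_sum_diff_le[OF assms(3) roots(2) assms(2) bound1, of "k + n0"]
      by (intro max.mono) auto
    also have "\<dots> \<le> B * \<rho> ^ Suc (k + n0) + B / t * av (\<alpha> k - L)"
      using \<open>0 \<le> B\<close> assms(2,5) av_minus_commute[of L "\<alpha> k"] by (intro max.boundedI) auto
    finally show ?thesis .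
  qed
  moreover have "(\<lambda>k. B * \<rho> ^ Suc (k + n0) + B / t * av (\<alpha> k - L)) \<longlonglongrightarrow> B * 0 + B / t * 0"
    using assms(5,6) LIMSEQ_ignore_initial_segment[OF LIMSEQ_power_zero, of \<rho> "Suc n0"]
    by (intro tendsto_add tendsto_mult tendsto_const lim) (auto simp: add.commute)
  ultimately have "av G \<le> 0"
    using LIMSEQ_le_const[of _ 0 "av G"] by simp
  then show "G = 0"
    using av_nonneg[of G] by simp
qed

lemma coeff_bound_if_no_zeros:
  assumes conv: "\<And>z. av (z - a) < r \<Longrightarrow> \<exists>s. sums_v av (\<lambda>i. g i * (z - a) ^ i) s"
    and nz: "\<And>z. av (z - a) < r \<Longrightarrow> ps_eval av g a z \<noteq> 0"
    and t: "0 < t" "t < r"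
  shows "av (g j) * t ^ j \<le> av (g 0)"
proof (rule ccontr)
  assume "\<not> ?thesis"
  then have big: "av (g 0) < av (g j) * t ^ j"
    by simp
  obtain x where x: "t < av x" "av x < r"
    using exists_av_between t by blast
  then obtain s where "sums_v av (\<lambda>i. g i * x ^ i) s"
    using conv[of "a + x"] by auto
  then have "Bseq (\<lambda>i. av (g i * x ^ i))"
    using sums_v_terms_tendsto_0 convergent_imp_Bseq convergentI by blast
  then obtain B where B: "0 < B" "\<And>i. av (g i * x ^ i) \<le> B"
    unfolding Bseq_def by auto
  define \<rho> where "\<rho> = t / av x"
  have \<rho>: "0 < \<rho>" "\<rho> < 1"
    using t x by (auto simp: \<rho>_def)
  have bound: "av (g i) * t ^ i \<le> B * \<rho> ^ i" for i
  proof -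
    have "x \<noteq> 0"
      using t x by auto
    then have "av (g i) * t ^ i = av (g i * x ^ i) * \<rho> ^ i"
      by (simp add: av_mult \<rho>_def power_divide)
    also have "\<dots> \<le> B * \<rho> ^ i"
      using B \<rho> by (intro mult_right_mono) auto
    finally show ?thesis .
  qed
  have "0 < av (g j) * t ^ j"
    using big av_nonneg[of "g 0"] by linarith
  then obtain N where N: "av (g j) * t ^ j \<le> av (g N) * t ^ N"
    "\<And>i. N < i \<Longrightarrow> av (g i) * t ^ i < av (g N) * t ^ N"
    using dominant_index[of "\<lambda>i. av (g i) * t ^ i", OF bound less_imp_le[OF \<rho>(1)] \<rho>(2)] by blast
  obtain \<alpha> L n0 where roots: "\<And>k. (\<Sum>i\<le>k + n0. g i * \<alpha> k ^ i) = 0" "\<And>k. av (\<alpha> k) \<le> t"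
    and lim: "(\<lambda>k. av (\<alpha> k - L)) \<longlonglongrightarrow> 0"
    using partial_sum_roots_converge[OF t(1) B(1) \<rho> bound N(2)] big N(1) by (metis order_less_le_trans)
  have "av L \<le> t"
    using av_limit_le[OF lim, of 0 0 t] roots(2) by simp
  then obtain G where G: "sums_v av (\<lambda>i. g i * L ^ i) G"
    using conv[of "a + L"] t by auto
  then have "G = 0"
    using partial_sum_roots_limit_is_zero[OF G t(1) \<open>av L \<le> t\<close> bound _ _ roots lim] \<rho> by simp
  moreover have "ps_eval av g a (a + L) = G"
    using ps_eval_eqI[of g "a + L" a G] G by simp
  ultimately show False
    using nz[of "a + L"] \<open>av L \<le> t\<close> t by simp
qed

end

section \<open>Series with zero-free derivative\<close>

locale nonvanishing_deriv_series = Cv_valuation av for av :: "'a::field_char_0 \<Rightarrow> real" +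
  fixes c :: "nat \<Rightarrow> 'a" and a :: 'a and r :: real
  assumes r_pos: "0 < r"
    and converges: "ps_converges_on av c a (disc av a r)"
    and deriv_nonzero: "\<forall>z\<in>disc av a r. ps_eval av (ps_deriv c) a z \<noteq> 0"
begin

abbreviation F :: "'a \<Rightarrow> 'a" where
  "F \<equiv> ps_eval av c a"

lemma sums_v_exists: "av (z - a) < r \<Longrightarrow> \<exists>s. sums_v av (\<lambda>i. c i * (z - a) ^ i) s"
  using converges unfolding ps_converges_on_def disc_def by auto

lemma coeff_1_nonzero: "c 1 \<noteq> 0"
proof -
  have "ps_eval av (ps_deriv c) a a \<noteq> 0"
    using deriv_nonzero r_pos by (simp add: disc_def)
  then show ?thesis
    by (simp add: ps_eval_center ps_deriv_def)
qed

lemma av_coeff_le: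
  assumes "1 \<le> i" "0 < t" "t < r"
  shows "av (c i) * (kappa av * t) ^ (i - 1) \<le> av (c 1)"
proof -
  have "av (ps_deriv c (i - 1)) * t ^ (i - 1) \<le> av (ps_deriv c 0)"
  proof (rule coeff_bound_if_no_zeros[OF _ _ assms(2,3)])
    fix z assume "av (z - a) < r"
    then show "\<exists>s. sums_v av (\<lambda>i. ps_deriv c i * (z - a) ^ i) s"
      using sums_v_exists sums_v_ps_deriv_exists by blast
    show "ps_eval av (ps_deriv c) a z \<noteq> 0"
      using deriv_nonzero \<open>av (z - a) < r\<close> by (simp add: disc_def)
  qed
  moreover have "ps_deriv c (i - 1) = of_nat i * c i" "ps_deriv c 0 = c 1"
    using assms(1) by (simp_all add: ps_deriv_def)
  ultimately have "av (c i) * av (of_nat i :: 'a) * t ^ (i - 1) \<le> av (c 1)"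
    by (simp add: av_mult mult_ac)
  moreover have "av (c i) * kappa av ^ (i - 1) * t ^ (i - 1) \<le> av (c i) * av (of_nat i :: 'a) * t ^ (i - 1)"
    using kappa_power_le_av_of_nat[OF assms(1)] assms(2) by (intro mult_right_mono mult_left_mono) auto
  ultimately show ?thesis
    by (simp add: power_mult_distrib mult_ac)
qed

lemma coeff_ratio_bound:
  assumes "0 < s" "s < kappa av * r"
  obtains q where "0 < q" "q < 1" "\<And>i. 2 \<le> i \<Longrightarrow> av (c i) * s ^ (i - 1) \<le> q * av (c 1)"
proof -
  have \<kappa>: "0 < kappa av"
    by (rule kappa_pos)
  define u where "u = s / kappa av"
  have "0 < u" "u < r"
    using assms \<kappa> by (auto simp: u_def field_simps)
  define t where "t = (u + r) / 2"
  have t: "u < t" "t < r" "0 < t"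
    using \<open>0 < u\<close> \<open>u < r\<close> by (auto simp: t_def)
  define q where "q = u / t"
  have q: "0 < q" "q < 1"
    using t \<open>0 < u\<close> by (auto simp: q_def)
  have s_eq: "s = kappa av * t * q"
    using t \<kappa> by (simp add: q_def u_def)
  have "av (c i) * s ^ (i - 1) \<le> q * av (c 1)" if "2 \<le> i" for i
  proof -
    have "av (c i) * s ^ (i - 1) = av (c i) * (kappa av * t) ^ (i - 1) * q ^ (i - 1)"
      unfolding s_eq by (simp add: power_mult_distrib)
    also have "\<dots> \<le> av (c 1) * q ^ (i - 1)"
      using av_coeff_le[of i t] that t q by (intro mult_right_mono) auto
    also have "\<dots> \<le> av (c 1) * q"
      using q that power_decreasing[of 1 "i - 1" q] by (intro mult_left_mono) auto
    finally show ?thesis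
      by (simp add: mult.commute)
  qed
  then show ?thesis
    using that q by blast
qed

lemma ps_eval_near_linear:
  assumes "0 < s" "s < kappa av * r"
  obtains q where "0 < q" "q < 1"
    "\<And>z w. av (z - a) \<le> s \<Longrightarrow> av (w - a) \<le> s \<Longrightarrow>
      av (F z - F w - c 1 * (z - w)) \<le> q * av (c 1) * av (z - w)"
proof -
  obtain q where q: "0 < q" "q < 1" and ratio: "\<And>i. 2 \<le> i \<Longrightarrow> av (c i) * s ^ (i - 1) \<le> q * av (c 1)"
    using coeff_ratio_bound[OF assms] by blast
  have "kappa av * r \<le> r"
    using mult_right_mono[OF kappa_le_1, of r] r_pos by simp
  then have "s < r"
    using assms(2) by linarith
  have "av (F z - F w - c 1 * (z - w)) \<le> q * av (c 1) * av (z - w)"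
    if z: "av (z - a) \<le> s" and w: "av (w - a) \<le> s" for z w
  proof -
    obtain Sz where Sz: "sums_v av (\<lambda>i. c i * (z - a) ^ i) Sz"
      using sums_v_exists[of z] z \<open>s < r\<close> by fastforce
    obtain Sw where Sw: "sums_v av (\<lambda>i. c i * (w - a) ^ i) Sw"
      using sums_v_exists[of w] w \<open>s < r\<close> by fastforce
    show ?thesis
      using sums_v_minus_linear_le[OF Sz Sw z w assms(1) ratio] ps_eval_eqI[OF Sz] ps_eval_eqI[OF Sw] by simp
  qed
  then show ?thesis
    using that q by blast
qed

lemma inj_on_disc: "inj_on F (disc av a (kappa av * r))"
proof (rule inj_onI)
  fix z w assume z: "z \<in> disc av a (kappa av * r)" and w: "w \<in> disc av a (kappa av * r)"
    and "F z = F w"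
  show "z = w"
  proof (rule ccontr)
    assume "z \<noteq> w"
    define s where "s = max (av (z - a)) (av (w - a))"
    have "z \<noteq> a \<or> w \<noteq> a"
      using \<open>z \<noteq> w\<close> by auto
    then have "0 < s"
      using av_pos by (auto simp: s_def less_max_iff_disj)
    moreover have "s < kappa av * r"
      using z w by (simp add: s_def disc_def)
    ultimately obtain q where "q < 1"
      and near: "\<And>u v. av (u - a) \<le> s \<Longrightarrow> av (v - a) \<le> s \<Longrightarrow>
        av (F u - F v - c 1 * (u - v)) \<le> q * av (c 1) * av (u - v)"
      using ps_eval_near_linear by blast
    have "av (F z - F w - c 1 * (z - w)) \<le> q * av (c 1) * av (z - w)"
      by (rule near) (simp_all add: s_def)
    then have "av (c 1) * av (z - w) \<le> q * (av (c 1) * av (z - w))"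
      using \<open>F z = F w\<close> by (simp add: av_mult mult.assoc)
    moreover have "0 < av (c 1) * av (z - w)"
      using coeff_1_nonzero \<open>z \<noteq> w\<close> av_pos by simp
    ultimately show False
      using \<open>q < 1\<close> by (simp add: mult_le_cancel_right1)
  qed
qed

lemma image_disc_subset: "F ` disc av a (kappa av * r) \<subseteq> disc av (c 0) (av (c 1) * kappa av * r)"
proof
  fix b assume "b \<in> F ` disc av a (kappa av * r)"
  then obtain z where z: "av (z - a) < kappa av * r" and b: "b = F z"
    by (auto simp: disc_def)
  have "av (F z - c 0) = av (c 1 * (z - a))"
  proof (cases "z = a")
    case False
    then have "0 < av (z - a)"
      using av_pos by simp
    then obtain q where "q < 1"
      and near: "\<And>u v. av (u - a) \<le> av (z - a) \<Longrightarrow> av (v - a) \<le> av (z - a) \<Longrightarrow>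
        av (F u - F v - c 1 * (u - v)) \<le> q * av (c 1) * av (u - v)"
      using ps_eval_near_linear z by blast
    have "av (F z - F a - c 1 * (z - a)) \<le> q * av (c 1) * av (z - a)"
      by (rule near) simp_all
    also have "\<dots> < av (c 1 * (z - a))"
      using \<open>q < 1\<close> False coeff_1_nonzero av_pos by (simp add: av_mult)
    finally have "av (F z - c 0 - c 1 * (z - a)) < av (c 1 * (z - a))"
      by (simp add: ps_eval_center)
    then show ?thesis
      using av_add_eq_left by fastforce
  qed (simp add: ps_eval_center)
  also have "\<dots> < av (c 1) * kappa av * r"
    using z coeff_1_nonzero av_pos by (simp add: av_mult mult.assoc)
  finally show "b \<in> disc av (c 0) (av (c 1) * kappa av * r)"
    by (simp add: b disc_def)
qed

lemma ps_eval_solvable: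
  assumes "0 < s" "s < kappa av * r" "av ((b - c 0) / c 1) \<le> s"
  shows "\<exists>L. av (L - a) \<le> s \<and> F L = b"
proof -
  obtain q where q: "0 < q" "q < 1"
    and near: "\<And>z w. av (z - a) \<le> s \<Longrightarrow> av (w - a) \<le> s \<Longrightarrow>
      av (F z - F w - c 1 * (z - w)) \<le> q * av (c 1) * av (z - w)"
    using ps_eval_near_linear[OF assms(1,2)] by blast
  \<comment> \<open>Newton iteration with the fixed slope \<open>c 1\<close>.\<close>
  define T where "T z = z - (F z - b) / c 1" for z
  have lip: "av (T z - T w) \<le> q * av (z - w)" if "av (z - a) \<le> s" "av (w - a) \<le> s" for z w
  proof -
    have "T z - T w = - (F z - F w - c 1 * (z - w)) / c 1"
      using coeff_1_nonzero by (simp add: T_def field_simps)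
    then have "av (T z - T w) = av (F z - F w - c 1 * (z - w)) / av (c 1)"
      by (simp only: av_divide av_uminus)
    also have "\<dots> \<le> q * av (c 1) * av (z - w) / av (c 1)"
      using near[OF that] by (rule divide_right_mono) simp
    finally show ?thesis
      using coeff_1_nonzero by simp
  qed
  have maps: "av (T z - a) \<le> s" if z: "av (z - a) \<le> s" for z
  proof -
    have "av (T z - T a) \<le> q * av (z - a)"
      using lip[OF z] assms(1) by simp
    also have "\<dots> \<le> s"
      using mult_left_le_one_le[of "av (z - a)" q] q z by simp
    finally have "av (T z - T a) \<le> s" .
    moreover have eq: "T z - a = (b - c 0) / c 1 + (T z - T a)"
      using coeff_1_nonzero by (simp add: T_def ps_eval_center field_simps)
    ultimately show ?thesis
      unfolding eq using av_add_le[of "(b - c 0) / c 1" "T z - T a"] assms(3) by (auto simp: le_max_iff_disj)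
  qed
  obtain L where "av (L - a) \<le> s" "T L = L"
    using contraction_has_fixpoint[of q s a T, OF _ q(2) _ maps lip] q assms(1) by auto
  then show ?thesis
    using coeff_1_nonzero by (auto simp: T_def)
qed

lemma disc_subset_image: "disc av (c 0) (av (c 1) * kappa av * r) \<subseteq> F ` disc av a (kappa av * r)"
proof
  fix b assume b: "b \<in> disc av (c 0) (av (c 1) * kappa av * r)"
  define u where "u = av ((b - c 0) / c 1)"
  have "u < kappa av * r"
    using b coeff_1_nonzero av_pos[of "c 1"] by (simp add: u_def disc_def field_simps)
  moreover have "0 \<le> u"
    by (simp add: u_def)
  define s where "s = (u + kappa av * r) / 2"
  have s: "0 < s" "s < kappa av * r" "u \<le> s"
    using \<open>u < kappa av * r\<close> \<open>0 \<le> u\<close> by (auto simp: s_def mult.commute)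
  then obtain L where L: "av (L - a) \<le> s" "F L = b"
    using ps_eval_solvable[of s b] unfolding u_def by blast
  have "av (L - a) < kappa av * r"
    using L(1) s(2) by linarith
  then show "b \<in> F ` disc av a (kappa av * r)"
    using L(2) unfolding disc_def by (intro image_eqI[of b F L]) auto
qed

end

theorem lemma4p2:
  fixes av :: "'a::field_char_0 \<Rightarrow> real" and a :: 'a and r :: real and c :: "nat \<Rightarrow> 'a"
  assumes "Cv_field av"
    and "r > 0"
    and "ps_converges_on av c a (disc av a r)"
    and "\<forall>z\<in>disc av a r. ps_eval av (ps_deriv c) a z \<noteq> 0"
  shows "bij_betw (ps_eval av c a) (disc av a (kappa av * r))
           (disc av (c 0) (av (c 1) * kappa av * r))"
proof -
  interpret nonvanishing_deriv_series av c a r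
    using assms by unfold_locales
  show ?thesis
    unfolding bij_betw_def using inj_on_disc image_disc_subset disc_subset_image by blast
qed

end
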